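(* For every $d\ge1$ and every $\mathbf{u}\in\binom{\mathbb{N}}{d}$ one has $\mathrm{Inc}(C(\mathbf{u}))=C(\mathbf{u}+\mathbf{1})$.
   Context: $\mathbb{N}=\{1,2,3,\dots\}$. For $d\ge1$, $\binom{\mathbb{N}}{d}$ is the set of $d$-element subsets of $\mathbb{N}$; an element is written $\mathbf{u}=(u_1,\ldots,u_d)$ with $u_1<\cdots<u_d$. The squashed order on $\binom{\mathbb{N}}{d}$: $\mathbf{u}<\mathbf{v}$ iff the largest element of the symmetric difference $(\mathbf{u}\setminus\mathbf{v})\cup(\mathbf{v}\setminus\mathbf{u})$ belongs to $\mathbf{v}$. For $\mathbf{u}\in\binom{\mathbb{N}}{d}$, $C(\mathbf{u})=\{\mathbf{v}\in\binom{\mathbb{N}}{d}\mid \mathbf{v}\le\mathbf{u}\}$ (squashed order), and $\mathbf{u}+\mathbf{1}=(u_1+1,\ldots,u_d+1)$. Let $\mathrm{Inc}_1$ be the set of maps $\pi\colon\mathbb{N}\to\mathbb{N}$ with $\pi(j)<\pi(j+1)$ and $\pi(j)\le j+1$ for all $j\ge1$, acting by $\pi(\mathbf{u})=(\pi(u_1),\ldots,\pi(u_d))$. For $\mathcal{F}\subseteq\binom{\mathbb{N}}{d}$, $\mathrm{Inc}(\mathcal{F})=\{\pi(\mathbf{u})\mid \mathbf{u}\in\mathcal{F},\ \pi\in\mathrm{Inc}_1\}$. *)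

theory Defs
  imports Main
begin

definition dsubsets :: "nat \<Rightarrow> nat set set" where
  "dsubsets d = {u. finite u \<and> card u = d \<and> (\<forall>x\<in>u. 1 \<le> x)}"

definition squashed_less :: "nat set \<Rightarrow> nat set \<Rightarrow> bool" where
  "squashed_less u v \<longleftrightarrow> u \<noteq> v \<and> Max ((u - v) \<union> (v - u)) \<in> v"

definition squashed_le :: "nat set \<Rightarrow> nat set \<Rightarrow> bool" where
  "squashed_le u v \<longleftrightarrow> u = v \<or> squashed_less u v"

definition Cset :: "nat \<Rightarrow> nat set \<Rightarrow> nat set set" where
  "Cset d u = {v \<in> dsubsets d. squashed_le v u}"

definition shift1 :: "nat set \<Rightarrow> nat set" where
  "shift1 u = (\<lambda>x. x + 1) ` u"

text \<open>Inc_1: maps N -> N (values at 0 irrelevant) with pi(j) < pi(j+1) and pi(j) <= j+1.\<close>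
definition Inc1 :: "(nat \<Rightarrow> nat) set" where
  "Inc1 = {\<pi>. \<forall>j\<ge>1. 1 \<le> \<pi> j \<and> \<pi> j < \<pi> (j + 1) \<and> \<pi> j \<le> j + 1}"

definition Inc :: "nat set set \<Rightarrow> nat set set" where
  "Inc F = {\<pi> ` u | u \<pi>. u \<in> F \<and> \<pi> \<in> Inc1}"

end

theory Submission
  imports Defs "HOL-Library.Nat_Bijection"
begin

text \<open>
  Encoding a finite set \<open>A\<close> of naturals by the binary number \<open>set_encode A = (\<Sum>x\<in>A. 2^x)\<close>
  turns the squashed order into the order of natural numbers: the largest element of the
  symmetric difference is the leading bit in which the two numbers differ. Under this
  encoding \<open>u + 1\<close> becomes \<open>2 * set_encode u\<close>, and a map in \<open>Inc\<^sub>1\<close> moves every element of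
  \<open>v\<close> at most as far as \<open>v + 1\<close> does, which gives \<open>Inc(C(u)) \<subseteq> C(u + 1)\<close>.
  Conversely, if \<open>w \<le> u + 1\<close> and \<open>a\<close> is the first positive integer missing from \<open>w\<close>, then
  \<open>w = {1..<a} \<union> H\<close> with \<open>H > a\<close>, and \<open>w\<close> is the image of \<open>v = {1..<a} \<union> (H - 1)\<close> under the map
  of \<open>Inc\<^sub>1\<close> skipping \<open>a\<close>. Now \<open>v + 1 = {2..a} \<union> H\<close> differs from \<open>w\<close> only below \<open>a + 1\<close>, so it
  stays below \<open>u + 1\<close> unless \<open>u + 1\<close> agrees with \<open>w\<close> from \<open>a + 1\<close> on; in that case, since
  \<open>1 \<notin> u + 1\<close>, counting forces \<open>u + 1 = v + 1\<close>. Either way \<open>v \<in> C(u)\<close>.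
\<close>

lemma set_encode_less_power:
  assumes "A \<subseteq> {..<t}"
  shows "set_encode A < 2 ^ t"
proof -
  have "set_encode A \<le> (\<Sum>i=0..<t. 2 ^ i)"
    unfolding set_encode_def using assms by (intro sum_mono2) auto
  also have "\<dots> = 2 ^ t - 1"
    by (rule sum_power2)
  finally show ?thesis
    using zero_less_power[of "2::nat" t] by linarith
qed

lemma Max_symdiff_in:
  assumes "finite u" "finite v" "u \<noteq> v"
  shows "Max ((u - v) \<union> (v - u)) \<in> (u - v) \<union> (v - u)"
  using assms by (intro Max_in) auto

lemma set_encode_less_if_Max_symdiff_in:
  assumes "finite u" "finite v" "u \<noteq> v" "Max ((u - v) \<union> (v - u)) \<in> v"
  shows "set_encode u < set_encode v"
proof -
  define M where "M = Max ((u - v) \<union> (v - u))"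
  have M: "M \<in> v - u"
    using Max_symdiff_in[OF assms(1-3)] assms(4) unfolding M_def by auto
  have "u - v \<subseteq> {..<M}"
    using assms M unfolding M_def by (auto intro: le_neq_implies_less)
  then have "set_encode (u - v) < 2 ^ M"
    by (rule set_encode_less_power)
  also have "\<dots> \<le> set_encode (v - u)"
    unfolding set_encode_def using M assms(2) by (intro member_le_sum) auto
  finally have "set_encode (u - v) < set_encode (v - u)" .
  moreover have "set_encode u = set_encode (u \<inter> v) + set_encode (u - v)"
    unfolding set_encode_def using assms(1) by (rule sum.Int_Diff)
  moreover have "set_encode v = set_encode (u \<inter> v) + set_encode (v - u)"
    unfolding set_encode_def using assms(2) by (metis Int_commute sum.Int_Diff)
  ultimately show ?thesis
    by simp
qed

lemma squashed_less_total:
  assumes "finite u" "finite v" "u \<noteq> v"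
  shows "squashed_less u v \<or> squashed_less v u"
  using Max_symdiff_in[OF assms] assms(3) unfolding squashed_less_def by (auto simp: Un_commute)

lemma squashed_less_iff_set_encode:
  assumes "finite u" "finite v"
  shows "squashed_less u v \<longleftrightarrow> set_encode u < set_encode v"
proof
  show "squashed_less u v \<Longrightarrow> set_encode u < set_encode v"
    using set_encode_less_if_Max_symdiff_in assms unfolding squashed_less_def by blast
next
  assume less: "set_encode u < set_encode v"
  then have "u \<noteq> v"
    by auto
  moreover have "\<not> squashed_less v u"
    using set_encode_less_if_Max_symdiff_in assms less unfolding squashed_less_def
    by (metis Un_commute not_less_iff_gr_or_eq)
  ultimately show "squashed_less u v"
    using squashed_less_total assms by blast
qed

lemma squashed_le_iff_set_encode:
  assumes "finite u" "finite v"
  shows "squashed_le u v \<longleftrightarrow> set_encode u \<le> set_encode v"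
  using squashed_less_iff_set_encode[OF assms] set_encode_eq[OF assms]
  unfolding squashed_le_def by auto

lemma Cset_eq_set_encode:
  assumes "finite u"
  shows "Cset d u = {v \<in> dsubsets d. set_encode v \<le> set_encode u}"
  unfolding Cset_def using squashed_le_iff_set_encode assms by (auto simp: dsubsets_def)

lemma set_encode_shift1:
  assumes "finite v"
  shows "set_encode (shift1 v) = 2 * set_encode v"
  unfolding set_encode_def shift1_def using assms
  by (simp add: sum.reindex sum_distrib_left)

lemma shift1_dsubsets: "u \<in> dsubsets d \<Longrightarrow> shift1 u \<in> dsubsets d"
  unfolding dsubsets_def shift1_def by (auto simp: card_image)

lemma set_encode_image_le:
  fixes A :: "nat set" and f g :: "nat \<Rightarrow> nat"
  assumes "finite A" "strict_mono_on A f" "strict_mono_on A g" "\<And>x. x \<in> A \<Longrightarrow> f x \<le> g x"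
  shows "set_encode (f ` A) \<le> set_encode (g ` A)"
  using assms
proof (induction A rule: finite_linorder_max_induct)
  case empty
  then show ?case by simp
next
  case (insert b A)
  have f_A: "f ` A \<subseteq> {..<f b}" and g_A: "g ` A \<subseteq> {..<g b}"
    using insert.hyps(2) insert.prems(1,2) by (auto intro: strict_mono_onD)
  have IH: "set_encode (f ` A) \<le> set_encode (g ` A)"
    using insert.IH insert.prems by (meson monotone_on_subset subset_insertI insertCI)
  have f_eq: "set_encode (f ` insert b A) = 2 ^ f b + set_encode (f ` A)"
    and g_eq: "set_encode (g ` insert b A) = 2 ^ g b + set_encode (g ` A)"
    using f_A g_A insert.hyps(1) by (auto intro!: set_encode_insert)
  show ?case
  proof (cases "f b = g b")
    case True
    then show ?thesis using f_eq g_eq IH by simp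
  next
    case False
    then have "Suc (f b) \<le> g b"
      using insert.prems(3) by (simp add: Suc_leI le_neq_implies_less)
    then have "2 ^ f b + 2 ^ f b \<le> (2::nat) ^ g b"
      by (metis mult_2 power_Suc power_increasing one_le_numeral)
    then show ?thesis
      using f_eq g_eq set_encode_less_power[OF f_A] by linarith
  qed
qed

lemma Inc1_strict_mono_on:
  assumes "\<pi> \<in> Inc1"
  shows "strict_mono_on {1..} \<pi>"
proof (rule strict_mono_onI)
  fix x y :: nat assume "x \<in> {1..}" "x < y"
  then show "\<pi> x < \<pi> y"
  proof (induction y)
    case (Suc y)
    then have "\<pi> y < \<pi> (Suc y)"
      using assms unfolding Inc1_def by auto
    then show ?case
      using Suc by (cases "x = y") auto
  qed simp
qed

lemma Inc1_image_dsubsets: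
  assumes "\<pi> \<in> Inc1" "v \<in> dsubsets d"
  shows "\<pi> ` v \<in> dsubsets d"
proof -
  have "v \<subseteq> {1..}"
    using assms(2) by (auto simp: dsubsets_def)
  then have "inj_on \<pi> v"
    using Inc1_strict_mono_on[OF assms(1)] strict_mono_on_imp_inj_on monotone_on_subset by blast
  then show ?thesis
    using assms by (auto simp: dsubsets_def Inc1_def card_image)
qed

lemma Inc_Cset_subset:
  assumes "finite u"
  shows "Inc (Cset d u) \<subseteq> Cset d (shift1 u)"
proof
  fix w assume "w \<in> Inc (Cset d u)"
  then obtain v \<pi> where w: "w = \<pi> ` v" and v: "v \<in> Cset d u" and \<pi>: "\<pi> \<in> Inc1"
    unfolding Inc_def by blast
  have v_d: "v \<in> dsubsets d" and v_le: "set_encode v \<le> set_encode u"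
    using v Cset_eq_set_encode[OF assms] by auto
  then have "finite v" and v_pos: "v \<subseteq> {1..}"
    by (auto simp: dsubsets_def)
  have "strict_mono_on v \<pi>" and "strict_mono_on v (\<lambda>x. x + 1)"
    using Inc1_strict_mono_on[OF \<pi>] v_pos monotone_on_subset by (blast, simp add: strict_mono_on_def)
  moreover have "\<And>x. x \<in> v \<Longrightarrow> \<pi> x \<le> x + 1"
    using \<pi> v_pos unfolding Inc1_def by auto
  ultimately have "set_encode w \<le> set_encode (shift1 v)"
    unfolding w shift1_def by (intro set_encode_image_le[OF \<open>finite v\<close>])
  also have "\<dots> \<le> set_encode (shift1 u)"
    using v_le \<open>finite v\<close> assms by (simp add: set_encode_shift1)
  finally show "w \<in> Cset d (shift1 u)"
    using Inc1_image_dsubsets[OF \<pi> v_d] assms Cset_eq_set_encode[of "shift1 u"]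
    by (simp add: w shift1_def)
qed

lemma set_encode_high_part:
  assumes "finite A"
  shows "set_encode {x \<in> A. t \<le> x} = 2 ^ t * (set_encode A div 2 ^ t)"
proof -
  have "2 ^ t dvd set_encode {x \<in> A. t \<le> x}"
    unfolding set_encode_def by (intro dvd_sum) (simp add: le_imp_power_dvd)
  then obtain q where q: "set_encode {x \<in> A. t \<le> x} = 2 ^ t * q" ..
  have low: "set_encode {x \<in> A. x < t} < 2 ^ t"
    by (rule set_encode_less_power) auto
  have "A = {x \<in> A. x < t} \<union> {x \<in> A. t \<le> x}"
    by auto
  then have "set_encode A = set_encode {x \<in> A. x < t} + 2 ^ t * q"
    unfolding set_encode_def using assms q[unfolded set_encode_def]
    by (metis (no_types, lifting) finite_Un sum.union_disjoint disjoint_iff mem_Collect_eq not_le)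
  then have "set_encode A div 2 ^ t = q"
    using low by simp
  then show ?thesis
    using q by simp
qed

lemma set_encode_replace_low_le:
  assumes "finite A" "finite B" "set_encode A \<le> set_encode B" "L \<subseteq> {..<t}"
  shows "set_encode (L \<union> {x \<in> A. t \<le> x}) \<le> set_encode B \<or> {x \<in> A. t \<le> x} = {x \<in> B. t \<le> x}"
proof -
  define p q where "p = set_encode A div 2 ^ t" and "q = set_encode B div 2 ^ t"
  have "p \<le> q"
    unfolding p_def q_def using assms(3) by (rule div_le_mono)
  then consider "p = q" | "Suc p \<le> q"
    by linarith
  then show ?thesis
  proof cases
    case 1
    then have "set_encode {x \<in> A. t \<le> x} = set_encode {x \<in> B. t \<le> x}"
      using set_encode_high_part assms(1,2) unfolding p_def q_def by metis
    then show ?thesis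
      using set_encode_eq assms(1,2) by auto
  next
    case 2
    have "L \<inter> {x \<in> A. t \<le> x} = {}" and "finite L"
      using assms(4) finite_subset by fastforce+
    then have "set_encode (L \<union> {x \<in> A. t \<le> x}) = set_encode L + 2 ^ t * p"
      unfolding p_def using set_encode_high_part[OF assms(1)] assms(1)
      by (simp add: set_encode_def sum.union_disjoint)
    also have "\<dots> < 2 ^ t * Suc p"
      using set_encode_less_power[OF assms(4)] by simp
    also have "\<dots> \<le> 2 ^ t * q"
      using 2 by (rule mult_le_mono2)
    also have "\<dots> \<le> set_encode B"
      unfolding q_def by simp
    finally show ?thesis
      by simp
  qed
qed

lemma set_encode_shift_initial_block_le:
  assumes le: "set_encode ({1..<a} \<union> H) \<le> set_encode B"
    and H: "finite H" "H \<subseteq> {a<..}"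
    and B: "finite B" "B \<subseteq> {2..}" "card B = card ({1..<a} \<union> H)"
  shows "set_encode ({2..a} \<union> H) \<le> set_encode B"
proof -
  have "{x \<in> {1..<a} \<union> H. Suc a \<le> x} = H"
    using H(2) by auto
  then consider "set_encode ({2..a} \<union> H) \<le> set_encode B" | "H = {x \<in> B. Suc a \<le> x}"
    using set_encode_replace_low_le[OF _ B(1) le, of "{2..a}" "Suc a"] H(1) by fastforce
  then show ?thesis
  proof cases
    case 2
    define L where "L = {x \<in> B. x < Suc a}"
    have B_eq: "B = L \<union> H" and "L \<inter> H = {}"
      unfolding L_def 2 by auto
    moreover have "{1..<a} \<inter> H = {}"
      using H(2) by auto
    ultimately have "card L = card {2..a}"
      using B H(1) by (simp add: card_Un_disjoint)
    moreover have "L \<subseteq> {2..a}"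
      using B(2) unfolding L_def by auto
    ultimately have "L = {2..a}"
      by (intro card_subset_eq) auto
    then show ?thesis
      using B_eq by simp
  qed
qed

lemma first_gap:
  fixes w :: "nat set"
  assumes "finite w"
  obtains a where "1 \<le> a" "a \<notin> w" "{1..<a} \<subseteq> w"
proof -
  obtain k :: nat where "\<forall>n\<in>w. n \<le> k"
    using assms finite_nat_set_iff_bounded_le by auto
  then have ex: "\<exists>n. 1 \<le> n \<and> n \<notin> w"
    by (intro exI[of _ "Suc k"]) auto
  define a where "a = (LEAST n. 1 \<le> n \<and> n \<notin> w)"
  have "1 \<le> a" "a \<notin> w"
    using LeastI_ex[OF ex] unfolding a_def by auto
  moreover have "{1..<a} \<subseteq> w"
    using not_less_Least unfolding a_def by fastforce
  ultimately show thesis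
    using that by blast
qed

lemma skip_in_Inc1: "(\<lambda>j. if j < a then j else j + 1) \<in> Inc1"
  unfolding Inc1_def by auto

lemma close_gap:
  fixes a :: nat and H :: "nat set"
  assumes "finite H" "H \<subseteq> {a<..}"
  defines "v \<equiv> {1..<a} \<union> (\<lambda>x. x - 1) ` H"
  shows "(\<lambda>j. if j < a then j else j + 1) ` v = {1..<a} \<union> H"
    and "shift1 v = {2..a} \<union> H"
    and "card v = card ({1..<a} \<union> H)"
proof -
  let ?skip = "\<lambda>j::nat. if j < a then j else j + 1"
  have "?skip ` (\<lambda>x. x - 1) ` H = H" and shift_H: "(\<lambda>x. x + 1) ` (\<lambda>x. x - 1) ` H = H"
    using assms(2) by (force simp: image_image intro: image_eqI)+
  moreover have "?skip ` {1..<a} = id ` {1..<a}"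
    by (intro image_cong) auto
  ultimately show "?skip ` v = {1..<a} \<union> H"
    unfolding v_def image_Un by simp
  have "(\<lambda>x. x + 1) ` {1..<a} = {2..a}"
    by (auto intro!: image_eqI[where x = "_ - 1"])
  then show "shift1 v = {2..a} \<union> H"
    unfolding v_def shift1_def image_Un shift_H by simp
  have "inj_on (\<lambda>x. x - 1) H"
    using assms(2) by (intro inj_on_diff_nat) auto
  moreover have "{1..<a} \<inter> (\<lambda>x. x - 1) ` H = {}" "{1..<a} \<inter> H = {}"
    using assms(2) by force+
  ultimately show "card v = card ({1..<a} \<union> H)"
    unfolding v_def using assms(1) by (simp add: card_Un_disjoint card_image)
qed

lemma Cset_shift1_subset_Inc:
  assumes "u \<in> dsubsets d"
  shows "Cset d (shift1 u) \<subseteq> Inc (Cset d u)"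
proof
  fix w assume "w \<in> Cset d (shift1 u)"
  then have w: "w \<in> dsubsets d" and w_le: "set_encode w \<le> set_encode (shift1 u)"
    using Cset_eq_set_encode[of "shift1 u"] shift1_dsubsets[OF assms] by (auto simp: dsubsets_def)
  then have "finite w" and w_pos: "\<forall>x\<in>w. 1 \<le> x"
    by (auto simp: dsubsets_def)
  obtain a where "1 \<le> a" "a \<notin> w" "{1..<a} \<subseteq> w"
    using first_gap[OF \<open>finite w\<close>] .
  define H where "H = {x \<in> w. a < x}"
  define v where "v = {1..<a} \<union> (\<lambda>x. x - 1) ` H"
  have "x \<in> {1..<a} \<union> H" if "x \<in> w" for x
  proof -
    have "1 \<le> x" "x \<noteq> a"
      using that w_pos \<open>a \<notin> w\<close> by auto
    then show ?thesis
      using that unfolding H_def by auto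
  qed
  then have w_eq: "w = {1..<a} \<union> H"
    using \<open>{1..<a} \<subseteq> w\<close> unfolding H_def by blast
  have H: "finite H" "H \<subseteq> {a<..}"
    using \<open>finite w\<close> unfolding H_def by auto
  note gap = close_gap[OF H, folded v_def]
  have "card v = card w"
    using gap(3) w_eq by simp
  moreover have "finite v" "\<forall>x\<in>v. 1 \<le> x"
    using \<open>finite H\<close> \<open>1 \<le> a\<close> unfolding v_def H_def by auto
  ultimately have "v \<in> dsubsets d"
    using w by (simp add: dsubsets_def)
  moreover have "set_encode (shift1 v) \<le> set_encode (shift1 u)"
    unfolding gap(2) using w_le w_eq H shift1_dsubsets[OF assms] assms w gap(3)
    by (intro set_encode_shift_initial_block_le) (auto simp: dsubsets_def shift1_def)
  ultimately have "v \<in> Cset d u"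
    using assms by (simp add: Cset_eq_set_encode set_encode_shift1 dsubsets_def)
  then show "w \<in> Inc (Cset d u)"
    unfolding Inc_def using gap(1) w_eq skip_in_Inc1 by blast
qed

theorem lemma3p2:
  fixes d :: nat and u :: "nat set"
  assumes "d \<ge> 1" and "u \<in> dsubsets d"
  shows "Inc (Cset d u) = Cset d (shift1 u)"
proof
  show "Inc (Cset d u) \<subseteq> Cset d (shift1 u)"
    using assms(2) by (intro Inc_Cset_subset) (simp add: dsubsets_def)
  show "Cset d (shift1 u) \<subseteq> Inc (Cset d u)"
    using assms(2) by (rule Cset_shift1_subset_Inc)
qed

end
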